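(* In the setting of the context, for the functions $S,E,I,R$ defined there, \[ S'(\infty)=E'(\infty)=I'(\infty)=R'(\infty)=0, \] where $f'(\infty):=\lim_{t\to\infty}f'(t)$.
   Context: Let $\beta,\gamma,\delta>0$ be constants and $\tilde S,\tilde E,\tilde I,\tilde R$ real numbers with $N:=\tilde S+\tilde E+\tilde I+\tilde R>0$. Standing assumptions: (A1) $\tilde I>0$; (A2) $\tilde E>(\gamma/\delta)\tilde I$; (A3) $\tilde S>\delta\tilde E/(\beta\tilde I)$; (A4) $\tilde R\ge 0$ and $N>\tilde S e^{(\beta/\gamma)\tilde R}+\tilde R$. Let $\alpha$ be the unique solution in $(\tilde R,N)$ of $x=N-\tilde S e^{(\beta/\gamma)\tilde R}e^{-(\beta/\gamma)x}$, and assume (A5) $\tilde S<(\gamma/\beta)e^{(\beta/\gamma)(\alpha-\tilde R)}$. Put $u_0:=e^{-(\beta/\gamma)\tilde R}$, $u_\infty:=e^{-(\beta/\gamma)\alpha}$. Let $\psi$ be the unique function, continuous and positive on $(u_\infty,u_0]$ and $C^1$ on $(u_\infty,u_0)$, satisfying $\psi'(u)\psi(u)-\frac{\gamma+\delta}{u}\psi(u)=-\delta\,\frac{\beta N-\beta\tilde S e^{(\beta/\gamma)\tilde R}u+\gamma\log u}{u}$ on $(u_\infty,u_0)$ and $\psi(u_0)=\beta\tilde I$. Let $\varphi(u):=\int_u^{u_0}\frac{d\xi}{\xi\psi(\xi)}$; $\varphi$ is a strictly decreasing continuous bijection from $(u_\infty,u_0]$ onto $[0,\infty)$, $C^1$ on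 $(u_\infty,u_0)$, with inverse $\varphi^{-1}:[0,\infty)\to(u_\infty,u_0]$. For $t\ge 0$ define $S(t)=\tilde S e^{(\beta/\gamma)\tilde R}\varphi^{-1}(t)$, $E(t)=\tilde E e^{-\delta t}+\tilde S e^{(\beta/\gamma)\tilde R}e^{-\delta t}\int_{\varphi^{-1}(t)}^{u_0}e^{\delta\varphi(v)}dv$, $I(t)=N-\tilde S e^{(\beta/\gamma)\tilde R}\varphi^{-1}(t)+\frac{\gamma}{\beta}\log\varphi^{-1}(t)-E(t)$, $R(t)=-\frac{\gamma}{\beta}\log\varphi^{-1}(t)$. *)

theory Defs
  imports "HOL-Analysis.Analysis"
begin

definition seir_phi :: "(real \<Rightarrow> real) \<Rightarrow> real \<Rightarrow> real \<Rightarrow> real" where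
  "seir_phi \<psi> u0 u = integral {u..u0} (\<lambda>\<xi>. 1 / (\<xi> * \<psi> \<xi>))"

definition seir_phiinv :: "(real \<Rightarrow> real) \<Rightarrow> real \<Rightarrow> real \<Rightarrow> real \<Rightarrow> real" where
  "seir_phiinv \<psi> uinf u0 = inv_into {uinf<..u0} (seir_phi \<psi> u0)"

end

theory Submission
  imports Defs
begin

(* Put u = exp (-(beta/gamma) R), so that S = K u with K = St exp ((beta/gamma) Rt).
   Along the trajectory u = phi^-1(t) satisfies u' = -u psi(u), and the compartments are
   functions of u alone: beta I = psi(u), beta E = G(u) := F(u) - psi(u), where
   F(u) = beta N - beta K u + gamma ln u. Since G' = delta G/(u psi) - beta K is negative
   wherever G <= 0 and G(u0) = beta Et > 0, G stays positive on (u_inf, u0]; hence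
   0 < psi < F <= C (u - u_inf) by concavity of F and F(u_inf) = 0. This bound makes the
   integral defining phi diverge logarithmically at u_inf, so phi^-1 is defined on all of
   [0, oo) and tends to u_inf. All four derivatives are continuous expressions in u and
   psi(u) that vanish at (u_inf, 0). *)

lemma pos_on_Ioc_if_deriv_neg_where_nonpos:
  fixes G G' :: "real \<Rightarrow> real"
  assumes cont: "continuous_on {a<..b} G" and pos_b: "0 < G b"
    and deriv: "\<And>x. x \<in> {a<..<b} \<Longrightarrow> (G has_real_derivative G' x) (at x)"
    and neg: "\<And>x. x \<in> {a<..<b} \<Longrightarrow> G x \<le> 0 \<Longrightarrow> G' x < 0"
    and x: "x \<in> {a<..b}"
  shows "0 < G x"
proof (rule ccontr)
  assume "\<not> 0 < G x"
  define Z where "Z = {x..b} \<inter> G -` {..0}"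
  have "closed Z"
    unfolding Z_def using x
    by (intro continuous_closed_preimage continuous_on_subset[OF cont]) auto
  moreover have "bounded Z"
    unfolding Z_def by (rule bounded_Int) simp
  ultimately have "compact Z"
    by (simp add: compact_eq_bounded_closed)
  have "x \<in> Z"
    unfolding Z_def using x \<open>\<not> 0 < G x\<close> by auto
  then obtain s where "s \<in> Z" and s_max: "\<And>w. w \<in> Z \<Longrightarrow> w \<le> s"
    using compact_attains_sup[OF \<open>compact Z\<close>] by blast
  then have "x \<le> s" "s \<le> b" "G s \<le> 0"
    unfolding Z_def by auto
  with pos_b x have s: "s \<in> {a<..<b}"
    by (cases "s = b") auto
  obtain d where "0 < d" and d: "\<And>h. 0 < h \<Longrightarrow> h < d \<Longrightarrow> G (s + h) < G s"
    using DERIV_neg_dec_right[OF deriv[OF s] neg[OF s \<open>G s \<le> 0\<close>]] by blast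
  define h where "h = min (d / 2) (b - s)"
  have "0 < h" "h < d" "s + h \<le> b"
    using \<open>0 < d\<close> s unfolding h_def by auto
  then have "s + h \<in> Z"
    using d[of h] \<open>G s \<le> 0\<close> \<open>x \<le> s\<close> unfolding Z_def by auto
  with s_max[of "s + h"] \<open>0 < h\<close> show False
    by simp
qed

lemma differentiable_and_deriv_tendsto_at_top:
  fixes f f' :: "real \<Rightarrow> real"
  assumes deriv: "\<And>t. 0 < t \<Longrightarrow> (f has_real_derivative f' t) (at t)"
    and lim: "(f' \<longlongrightarrow> l) at_top"
  shows "(\<forall>t>0. f differentiable (at t)) \<and> (deriv f \<longlongrightarrow> l) at_top"
proof
  show "\<forall>t>0. f differentiable (at t)"
    using deriv real_differentiable_def by blast
  have "\<forall>\<^sub>F t in at_top. f' t = deriv f t"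
    using eventually_gt_at_top[of 0] by eventually_elim (simp add: DERIV_imp_deriv[OF deriv])
  with lim show "(deriv f \<longlongrightarrow> l) at_top"
    by (rule Lim_transform_eventually)
qed

section \<open>Inverting a divergent tail integral\<close>

context
  fixes a b :: real and g :: "real \<Rightarrow> real"
  assumes a_less_b: "a < b"
    and g_cont: "continuous_on {a<..b} g"
    and g_pos: "\<And>x. x \<in> {a<..b} \<Longrightarrow> 0 < g x"
begin

private lemma continuous_on_Icc_in_Ioc: "a < x \<Longrightarrow> y \<le> b \<Longrightarrow> continuous_on {x..y} g"
  by (rule continuous_on_subset[OF g_cont]) auto

lemma tail_integral_continuous_on:
  "a < x \<Longrightarrow> continuous_on {x..b} (\<lambda>y. integral {y..b} g)"
  by (intro indefinite_integral_continuous_1' integrable_continuous_interval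
      continuous_on_Icc_in_Ioc) auto

lemma tail_integral_has_real_derivative:
  assumes x: "x \<in> {a<..<b}"
  shows "((\<lambda>y. integral {y..b} g) has_real_derivative - g x) (at x)"
proof -
  define c where "c = (a + x) / 2"
  have c: "a < c" "c < x"
    using x unfolding c_def by auto
  have "((\<lambda>y. integral {y..b} g) has_real_derivative - g x) (at x within {c..b})"
    using x c by (intro integral_has_real_derivative' continuous_on_Icc_in_Ioc) auto
  then show ?thesis
    using at_within_Icc_at[of c x b] c x by auto
qed

lemma tail_integral_strict_antimono:
  assumes "a < x" "x < y" "y \<le> b"
  shows "integral {y..b} g < integral {x..b} g"
proof -
  have "integral {x..y} (\<lambda>_. 0) < integral {x..y} g"
    using assms g_pos continuous_on_Icc_in_Ioc[of x y]
    by (intro integral_less[of x y, simplified]) auto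
  moreover have "integral {x..y} g + integral {y..b} g = integral {x..b} g"
    using assms
    by (intro Henstock_Kurzweil_Integration.integral_combine integrable_continuous_interval
        continuous_on_Icc_in_Ioc) auto
  ultimately show ?thesis
    by simp
qed

lemma tail_integral_nonneg: "x \<in> {a<..b} \<Longrightarrow> 0 \<le> integral {x..b} g"
  using tail_integral_strict_antimono[of x b] by (cases "x = b") auto

lemma tail_integral_ge_ln:
  assumes g_ge: "\<And>y. y \<in> {a<..b} \<Longrightarrow> c / (y - a) \<le> g y"
    and x: "x \<in> {a<..b}"
  shows "c * (ln (b - a) - ln (x - a)) \<le> integral {x..b} g"
proof -
  have "((\<lambda>y. c / (y - a)) has_integral c * ln (b - a) - c * ln (x - a)) {x..b}"
  proof (rule fundamental_theorem_of_calculus)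
    show "x \<le> b"
      using x by simp
    fix y
    assume "y \<in> {x..b}"
    with x have "0 < y - a"
      by simp
    then show "((\<lambda>y. c * ln (y - a)) has_vector_derivative c / (y - a)) (at y within {x..b})"
      by (auto intro!: derivative_eq_intros
          simp: has_real_derivative_iff_has_vector_derivative[symmetric] field_simps)
  qed
  moreover have "g integrable_on {x..b}"
    using x by (intro integrable_continuous_interval continuous_on_Icc_in_Ioc) auto
  ultimately show ?thesis
    using x g_ge by (intro has_integral_le[OF _ integrable_integral]) (auto simp: algebra_simps)
qed

context
  fixes c :: real
  assumes c_pos: "0 < c" and g_ge: "\<And>y. y \<in> {a<..b} \<Longrightarrow> c / (y - a) \<le> g y"
begin

lemma tail_integral_image: "(\<lambda>y. integral {y..b} g) ` {a<..b} = {0..}"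
proof (intro equalityI subsetI)
  fix t :: real
  assume "t \<in> {0..}"
  define x where "x = a + (b - a) * exp (- t / c)"
  have "(b - a) * exp (- t / c) \<le> b - a"
    using \<open>t \<in> {0..}\<close> a_less_b c_pos by (simp add: mult_left_le)
  moreover have "0 < (b - a) * exp (- t / c)"
    using a_less_b by simp
  ultimately have x: "x \<in> {a<..b}"
    unfolding x_def greaterThanAtMost_iff by linarith
  have "c * (ln (b - a) - ln (x - a)) = t"
    using a_less_b c_pos unfolding x_def by (simp add: ln_mult)
  then have "t \<le> integral {x..b} g"
    using tail_integral_ge_ln[OF g_ge x] by simp
  moreover have "integral {b..b} g \<le> t"
    using \<open>t \<in> {0..}\<close> by simp
  ultimately obtain y where "x \<le> y" "y \<le> b" "integral {y..b} g = t"
    using IVT2'[of "\<lambda>y. integral {y..b} g" b t x] x tail_integral_continuous_on[of x] by auto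
  with x show "t \<in> (\<lambda>y. integral {y..b} g) ` {a<..b}"
    by force
qed (use tail_integral_nonneg in auto)

lemma inj_on_tail_integral: "inj_on (\<lambda>y. integral {y..b} g) {a<..b}"
  by (rule linorder_inj_onI') (auto dest: tail_integral_strict_antimono)

lemma tail_integral_inv:
  assumes "0 < t"
  shows "inv_into {a<..b} (\<lambda>y. integral {y..b} g) t \<in> {a<..<b}"
    and "integral {inv_into {a<..b} (\<lambda>y. integral {y..b} g) t..b} g = t"
proof -
  have "t \<in> (\<lambda>y. integral {y..b} g) ` {a<..b}"
    using assms tail_integral_image by auto
  then have "inv_into {a<..b} (\<lambda>y. integral {y..b} g) t \<in> {a<..b}"
    and eq: "integral {inv_into {a<..b} (\<lambda>y. integral {y..b} g) t..b} g = t"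
    by (rule inv_into_into, rule f_inv_into_f[where f = "\<lambda>y. integral {y..b} g"])
  with assms show "inv_into {a<..b} (\<lambda>y. integral {y..b} g) t \<in> {a<..<b}"
    by (cases "inv_into {a<..b} (\<lambda>y. integral {y..b} g) t = b") auto
  show "integral {inv_into {a<..b} (\<lambda>y. integral {y..b} g) t..b} g = t"
    by (fact eq)
qed

lemma tail_integral_inv_has_real_derivative:
  assumes "0 < t"
  shows "(inv_into {a<..b} (\<lambda>y. integral {y..b} g) has_real_derivative
           - 1 / g (inv_into {a<..b} (\<lambda>y. integral {y..b} g) t)) (at t)"
proof -
  define f where "f = (\<lambda>y. integral {y..b} g)"
  define x where "x = inv_into {a<..b} f t"
  have x: "x \<in> {a<..<b}" and "f x = t"
    using tail_integral_inv[OF assms] unfolding f_def x_def by auto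
  have inv_f: "inv_into {a<..b} f (f z) = z" if "z \<in> {a<..b}" for z
    using inj_on_tail_integral that unfolding f_def by (rule inv_into_f_f)
  have "isCont (inv_into {a<..b} f) (f x)"
  proof (rule isCont_inverse_function2[of "(a + x) / 2" x "(x + b) / 2"])
    fix z
    assume "(a + x) / 2 \<le> z" "z \<le> (x + b) / 2"
    with x have z: "z \<in> {a<..<b}"
      by simp
    then show "inv_into {a<..b} f (f z) = z"
      by (intro inv_f) auto
    show "isCont f z"
      unfolding f_def using z by (rule DERIV_isCont[OF tail_integral_has_real_derivative])
  qed (use x in auto)
  then have "isCont (inv_into {a<..b} f) t"
    using \<open>f x = t\<close> by simp
  moreover have "(f has_real_derivative - g x) (at (inv_into {a<..b} f t))"
    unfolding x_def[symmetric] unfolding f_def using x by (rule tail_integral_has_real_derivative)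
  moreover have "\<forall>y. 0 < y \<and> y < t + 1 \<longrightarrow> f (inv_into {a<..b} f y) = y"
    unfolding f_def using tail_integral_inv(2) by blast
  moreover have "- g x \<noteq> 0"
    using g_pos[of x] x by simp
  ultimately have "(inv_into {a<..b} f has_real_derivative inverse (- g x)) (at t)"
    using \<open>0 < t\<close> by (intro DERIV_inverse_function[where a = 0 and b = "t + 1"]) auto
  then show ?thesis
    unfolding f_def x_def by (simp add: divide_inverse)
qed

lemma tail_integral_inv_tendsto: "(inv_into {a<..b} (\<lambda>y. integral {y..b} g) \<longlongrightarrow> a) at_top"
proof (rule tendstoI)
  fix e :: real
  assume "0 < e"
  define w where "w = min (a + e / 2) b"
  have w: "w \<in> {a<..b}" "w < a + e"
    using \<open>0 < e\<close> a_less_b unfolding w_def by auto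
  have "dist (inv_into {a<..b} (\<lambda>y. integral {y..b} g) t) a < e"
    if t: "integral {w..b} g < t" for t
  proof -
    define x where "x = inv_into {a<..b} (\<lambda>y. integral {y..b} g) t"
    have "0 < t"
      using t tail_integral_nonneg[OF w(1)] by simp
    then have x: "x \<in> {a<..<b}" "integral {x..b} g = t"
      using tail_integral_inv unfolding x_def by auto
    have "x < w"
    proof (rule ccontr)
      assume "\<not> x < w"
      then have "integral {x..b} g \<le> integral {w..b} g"
        using tail_integral_strict_antimono[of w x] x w by (cases "x = w") auto
      with x t show False
        by simp
    qed
    with x w show ?thesis
      unfolding x_def by (simp add: dist_real_def)
  qed
  then show "\<forall>\<^sub>F t in at_top. dist (inv_into {a<..b} (\<lambda>y. integral {y..b} g) t) a < e"
    by (rule eventually_mono[OF eventually_gt_at_top])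
qed

end

end

section \<open>The SEIR trajectory in the variable u\<close>

(* ui, u0 are the paper's u_inf, u_0; E0 = Et. Along the solution, F u = beta (E + I),
   psi u = beta I and G u = beta E. *)
locale seir_trajectory =
  fixes \<beta> \<gamma> \<delta> N K ui u0 E0 :: real and \<psi> :: "real \<Rightarrow> real"
  assumes rates_pos: "0 < \<beta>" "0 < \<gamma>" "0 < \<delta>"
    and K_pos: "0 < K" and E0_pos: "0 < E0"
    and ui_pos: "0 < ui" and ui_less_u0: "ui < u0"
    and load_ui: "\<beta> * N - \<beta> * K * ui + \<gamma> * ln ui = 0"
    and psi_u0: "\<psi> u0 = \<beta> * N - \<beta> * K * u0 + \<gamma> * ln u0 - \<beta> * E0"
    and psi_cont: "continuous_on {ui<..u0} \<psi>"
    and psi_pos: "\<And>v. v \<in> {ui<..u0} \<Longrightarrow> 0 < \<psi> v"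
    and psi_differentiable: "\<psi> differentiable_on {ui<..<u0}"
    and psi_ode: "\<And>v. v \<in> {ui<..<u0} \<Longrightarrow> deriv \<psi> v * \<psi> v - (\<gamma> + \<delta>) / v * \<psi> v
      = - \<delta> * (\<beta> * N - \<beta> * K * v + \<gamma> * ln v) / v"
begin

definition F :: "real \<Rightarrow> real" where
  "F v = \<beta> * N - \<beta> * K * v + \<gamma> * ln v"

definition G :: "real \<Rightarrow> real" where
  "G v = F v - \<psi> v"

lemma F_ui: "F ui = 0"
  using load_ui unfolding F_def .

lemma G_u0: "G u0 = \<beta> * E0"
  using psi_u0 unfolding G_def F_def by simp

lemma psi_has_real_derivative:
  "v \<in> {ui<..<u0} \<Longrightarrow> (\<psi> has_real_derivative deriv \<psi> v) (at v)"
  using psi_differentiable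
  by (simp add: differentiable_on_eq_differentiable_at DERIV_deriv_iff_real_differentiable)

lemma deriv_psi_eq:
  assumes v: "v \<in> {ui<..<u0}"
  shows "deriv \<psi> v = ((\<gamma> + \<delta>) * \<psi> v - \<delta> * F v) / (v * \<psi> v)"
proof -
  have "0 < v" "0 < \<psi> v"
    using v ui_pos psi_pos[of v] by auto
  with psi_ode[OF v] show ?thesis
    unfolding F_def by (simp add: field_simps)
qed

lemma F_has_real_derivative: "0 < v \<Longrightarrow> (F has_real_derivative \<gamma> / v - \<beta> * K) (at v)"
  unfolding F_def by (auto intro!: derivative_eq_intros simp: field_simps)

lemma G_has_real_derivative:
  assumes v: "v \<in> {ui<..<u0}"
  shows "(G has_real_derivative \<delta> * G v / (v * \<psi> v) - \<beta> * K) (at v)"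
proof -
  have "0 < v" "0 < \<psi> v"
    using v ui_pos psi_pos[of v] by auto
  then have "\<gamma> / v - \<beta> * K - deriv \<psi> v = \<delta> * G v / (v * \<psi> v) - \<beta> * K"
    unfolding G_def deriv_psi_eq[OF v] by (simp add: field_simps)
  with F_has_real_derivative[OF \<open>0 < v\<close>] psi_has_real_derivative[OF v] show ?thesis
    unfolding G_def[abs_def] by (metis DERIV_diff)
qed

lemma G_continuous_on: "continuous_on {ui<..u0} G"
  unfolding G_def F_def using ui_pos psi_cont by (intro continuous_intros) auto

lemma G_pos: "v \<in> {ui<..u0} \<Longrightarrow> 0 < G v"
proof (rule pos_on_Ioc_if_deriv_neg_where_nonpos[OF G_continuous_on _ G_has_real_derivative])
  show "0 < G u0"
    using G_u0 rates_pos E0_pos by simp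
  fix x
  assume "x \<in> {ui<..<u0}" "G x \<le> 0"
  moreover from this have "0 < x * \<psi> x"
    using ui_pos psi_pos[of x] by simp
  ultimately have "\<delta> * G x / (x * \<psi> x) \<le> 0"
    using rates_pos by (simp add: divide_nonpos_pos mult_nonneg_nonpos)
  with rates_pos K_pos show "\<delta> * G x / (x * \<psi> x) - \<beta> * K < 0"
    by (smt (verit) mult_pos_pos)
qed

lemma F_le_linear:
  assumes "0 < v"
  shows "F v \<le> (\<gamma> / ui - \<beta> * K) * (v - ui)"
proof -
  have "ln (v / ui) \<le> v / ui - 1"
    using assms ui_pos by (intro ln_le_minus_one) simp
  then have "\<gamma> * (ln v - ln ui) \<le> \<gamma> * (v / ui - 1)"
    using assms ui_pos rates_pos by (simp add: ln_div)
  moreover have "F v = - \<beta> * K * (v - ui) + \<gamma> * (ln v - ln ui)"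
    using F_ui unfolding F_def by (simp add: algebra_simps)
  moreover have "(\<gamma> / ui - \<beta> * K) * (v - ui) = - \<beta> * K * (v - ui) + \<gamma> * (v / ui - 1)"
    using ui_pos by (simp add: field_simps)
  ultimately show ?thesis
    by linarith
qed

lemma psi_less_linear: "v \<in> {ui<..u0} \<Longrightarrow> \<psi> v < (\<gamma> / ui - \<beta> * K) * (v - ui)"
  using G_pos[of v] F_le_linear[of v] ui_pos unfolding G_def by auto

lemma slope_pos: "0 < \<gamma> / ui - \<beta> * K"
proof -
  have "0 < (\<gamma> / ui - \<beta> * K) * (u0 - ui)"
    using psi_less_linear[of u0] psi_pos[of u0] ui_less_u0 by simp
  with ui_less_u0 show ?thesis
    by (simp add: zero_less_mult_iff)
qed

lemma integrand_ge:
  assumes v: "v \<in> {ui<..u0}"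
  shows "1 / (u0 * (\<gamma> / ui - \<beta> * K)) / (v - ui) \<le> 1 / (v * \<psi> v)"
proof -
  have "0 < v" "0 < \<psi> v"
    using v ui_pos psi_pos by auto
  have "v * \<psi> v \<le> u0 * ((\<gamma> / ui - \<beta> * K) * (v - ui))"
    using v psi_less_linear[OF v] \<open>0 < v\<close> \<open>0 < \<psi> v\<close> by (intro mult_mono) auto
  then show ?thesis
    using \<open>0 < v\<close> \<open>0 < \<psi> v\<close> by (simp add: divide_divide_eq_left' frac_le mult.assoc)
qed

lemma integrand_continuous_on: "continuous_on {ui<..u0} (\<lambda>v. 1 / (v * \<psi> v))"
  using psi_cont psi_pos ui_pos by (intro continuous_intros) (auto simp: less_imp_neq[symmetric])

lemma integrand_pos: "v \<in> {ui<..u0} \<Longrightarrow> 0 < 1 / (v * \<psi> v)"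
  using psi_pos ui_pos by simp

abbreviation \<phi> :: "real \<Rightarrow> real" where
  "\<phi> \<equiv> seir_phi \<psi> u0"

abbreviation u :: "real \<Rightarrow> real" where
  "u \<equiv> seir_phiinv \<psi> ui u0"

lemma phi_u0: "\<phi> u0 = 0"
  unfolding seir_phi_def by simp

lemma phi_has_real_derivative:
  "v \<in> {ui<..<u0} \<Longrightarrow> (\<phi> has_real_derivative - (1 / (v * \<psi> v))) (at v)"
  unfolding seir_phi_def[abs_def]
  by (rule tail_integral_has_real_derivative[OF ui_less_u0 integrand_continuous_on integrand_pos])

lemma phi_continuous_on: "ui < x \<Longrightarrow> continuous_on {x..u0} \<phi>"
  unfolding seir_phi_def[abs_def]
  by (rule tail_integral_continuous_on[OF ui_less_u0 integrand_continuous_on integrand_pos])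

lemma u_mem: "0 < t \<Longrightarrow> u t \<in> {ui<..<u0}"
  and phi_u: "0 < t \<Longrightarrow> \<phi> (u t) = t"
  and u_has_real_derivative: "0 < t \<Longrightarrow> (u has_real_derivative - (u t * \<psi> (u t))) (at t)"
  and u_tendsto: "(u \<longlongrightarrow> ui) at_top"
proof -
  have c: "0 < 1 / (u0 * (\<gamma> / ui - \<beta> * K))"
    using slope_pos ui_pos ui_less_u0 by simp
  note tail = ui_less_u0 integrand_continuous_on integrand_pos c integrand_ge
  note defs = seir_phiinv_def seir_phi_def[abs_def]
  show "0 < t \<Longrightarrow> u t \<in> {ui<..<u0}"
    unfolding defs by (rule tail_integral_inv(1)[OF tail])
  show "0 < t \<Longrightarrow> \<phi> (u t) = t"
    unfolding defs by (rule tail_integral_inv(2)[OF tail])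
  show "(u \<longlongrightarrow> ui) at_top"
    unfolding defs by (rule tail_integral_inv_tendsto[OF tail])
  show "0 < t \<Longrightarrow> (u has_real_derivative - (u t * \<psi> (u t))) (at t)"
    using tail_integral_inv_has_real_derivative[OF tail] unfolding defs by simp
qed

lemma K_integral_exp_phi:
  assumes x: "x \<in> {ui<..<u0}"
  shows "K * integral {x..u0} (\<lambda>v. exp (\<delta> * \<phi> v)) = exp (\<delta> * \<phi> x) * G x / \<beta> - E0"
proof -
  \<comment> \<open>H is a primitive of -K exp (delta phi), by the equations for G' and phi' = -1/(w psi w)\<close>
  define H where "H w = exp (\<delta> * \<phi> w) * G w / \<beta>" for w
  have "(H has_real_derivative - K * exp (\<delta> * \<phi> w)) (at w)" if w: "w \<in> {x<..<u0}" for w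
  proof -
    have w': "w \<in> {ui<..<u0}"
      using w x by simp
    then have "0 < w" "0 < \<psi> w"
      using ui_pos psi_pos[of w] by auto
    have "(H has_real_derivative
        (exp (\<delta> * \<phi> w) * (\<delta> * - (1 / (w * \<psi> w))) * G w
          + (\<delta> * G w / (w * \<psi> w) - \<beta> * K) * exp (\<delta> * \<phi> w)) / \<beta>) (at w)"
      unfolding H_def[abs_def]
      by (intro DERIV_cdivide DERIV_mult DERIV_chain2[OF DERIV_exp] DERIV_cmult
          phi_has_real_derivative G_has_real_derivative w')
    with \<open>0 < w\<close> \<open>0 < \<psi> w\<close> rates_pos show ?thesis
      by (simp add: field_simps)
  qed
  moreover have "continuous_on {x..u0} G"
    using x by (intro continuous_on_subset[OF G_continuous_on]) auto
  then have "continuous_on {x..u0} H"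
    unfolding H_def using x phi_continuous_on[of x] rates_pos by (intro continuous_intros) auto
  ultimately have "((\<lambda>w. - K * exp (\<delta> * \<phi> w)) has_integral H u0 - H x) {x..u0}"
    using x by (intro fundamental_theorem_of_calculus_interior)
      (auto simp: has_real_derivative_iff_has_vector_derivative[symmetric])
  then have "integral {x..u0} (\<lambda>w. - K * exp (\<delta> * \<phi> w)) = H u0 - H x"
    by (rule integral_unique)
  then have "- K * integral {x..u0} (\<lambda>w. exp (\<delta> * \<phi> w)) = H u0 - H x"
    by simp
  then show ?thesis
    using G_u0 rates_pos unfolding H_def phi_u0 by simp
qed

lemma E_formula_eq_G:
  assumes "0 < t"
  shows "E0 * exp (- \<delta> * t) + K * exp (- \<delta> * t) * integral {u t..u0} (\<lambda>v. exp (\<delta> * \<phi> v))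
    = G (u t) / \<beta>"
proof -
  have "E0 * exp (- \<delta> * t) + K * exp (- \<delta> * t) * integral {u t..u0} (\<lambda>v. exp (\<delta> * \<phi> v))
      = exp (- \<delta> * t) * (E0 + K * integral {u t..u0} (\<lambda>v. exp (\<delta> * \<phi> v)))"
    by (simp add: algebra_simps)
  also have "\<dots> = (exp (- \<delta> * t) * exp (\<delta> * t)) * G (u t) / \<beta>"
    using K_integral_exp_phi[OF u_mem[OF assms]] phi_u[OF assms] by simp
  also have "exp (- \<delta> * t) * exp (\<delta> * t) = 1"
    by (simp flip: exp_add)
  finally show ?thesis
    by simp
qed

lemma ln_u_has_real_derivative:
  assumes "0 < t"
  shows "((\<lambda>t. - (\<gamma> / \<beta>) * ln (u t)) has_real_derivative \<gamma> / \<beta> * \<psi> (u t)) (at t)"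
proof -
  have "0 < u t"
    using u_mem[OF assms] ui_pos by simp
  have "((\<lambda>t. - (\<gamma> / \<beta>) * ln (u t)) has_real_derivative
      - (\<gamma> / \<beta>) * (inverse (u t) * - (u t * \<psi> (u t)))) (at t)"
    by (intro DERIV_cmult DERIV_chain2[OF DERIV_ln[OF \<open>0 < u t\<close>] u_has_real_derivative[OF assms]])
  moreover have "- (\<gamma> / \<beta>) * (inverse (u t) * - (u t * \<psi> (u t))) = \<gamma> / \<beta> * \<psi> (u t)"
    using \<open>0 < u t\<close> by simp
  ultimately show ?thesis
    by (rule DERIV_cong)
qed

lemma G_u_has_real_derivative:
  assumes "0 < t"
  shows "((\<lambda>t. G (u t) / \<beta>) has_real_derivative K * u t * \<psi> (u t) - \<delta> * G (u t) / \<beta>) (at t)"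
proof -
  have "0 < u t" "0 < \<psi> (u t)"
    using u_mem[OF assms] ui_pos psi_pos[of "u t"] by auto
  have "((\<lambda>t. G (u t) / \<beta>) has_real_derivative
      (\<delta> * G (u t) / (u t * \<psi> (u t)) - \<beta> * K) * - (u t * \<psi> (u t)) / \<beta>) (at t)"
    by (intro DERIV_cdivide DERIV_chain2[OF G_has_real_derivative u_has_real_derivative]
        u_mem assms)
  moreover have "(\<delta> * G (u t) / (u t * \<psi> (u t)) - \<beta> * K) * - (u t * \<psi> (u t)) / \<beta>
      = K * u t * \<psi> (u t) - \<delta> * G (u t) / \<beta>"
    using \<open>0 < u t\<close> \<open>0 < \<psi> (u t)\<close> rates_pos by (simp add: field_simps)
  ultimately show ?thesis
    by (rule DERIV_cong)
qed

lemma psi_u_has_real_derivative: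
  assumes "0 < t"
  shows "((\<lambda>t. \<psi> (u t) / \<beta>) has_real_derivative
    (\<delta> * F (u t) - (\<gamma> + \<delta>) * \<psi> (u t)) / \<beta>) (at t)"
proof -
  have "0 < u t" "0 < \<psi> (u t)"
    using u_mem[OF assms] ui_pos psi_pos[of "u t"] by auto
  have "((\<lambda>t. \<psi> (u t) / \<beta>) has_real_derivative
      deriv \<psi> (u t) * - (u t * \<psi> (u t)) / \<beta>) (at t)"
    by (intro DERIV_cdivide DERIV_chain2[OF psi_has_real_derivative u_has_real_derivative]
        u_mem assms)
  moreover have "deriv \<psi> (u t) * - (u t * \<psi> (u t)) / \<beta>
      = (\<delta> * F (u t) - (\<gamma> + \<delta>) * \<psi> (u t)) / \<beta>"
    using \<open>0 < u t\<close> \<open>0 < \<psi> (u t)\<close> rates_pos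
    unfolding deriv_psi_eq[OF u_mem[OF assms]] by (simp add: field_simps)
  ultimately show ?thesis
    by (rule DERIV_cong)
qed

lemma F_u_tendsto: "((\<lambda>t. F (u t)) \<longlongrightarrow> 0) at_top"
proof -
  have "isCont F ui"
    by (rule DERIV_isCont[OF F_has_real_derivative[OF ui_pos]])
  from isCont_tendsto_compose[OF this u_tendsto] show ?thesis
    unfolding F_ui .
qed

lemma psi_u_tendsto: "((\<lambda>t. \<psi> (u t)) \<longlongrightarrow> 0) at_top"
proof (rule tendsto_sandwich[OF _ _ tendsto_const F_u_tendsto])
  have "0 < \<psi> (u t) \<and> \<psi> (u t) < F (u t)" if "0 < t" for t
    using u_mem[OF that] psi_pos[of "u t"] G_pos[of "u t"] unfolding G_def by auto
  then show "\<forall>\<^sub>F t in at_top. 0 \<le> \<psi> (u t)" "\<forall>\<^sub>F t in at_top. \<psi> (u t) \<le> F (u t)"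
    by (auto intro: eventually_mono[OF eventually_gt_at_top[of 0]] less_imp_le)
qed

lemma G_u_tendsto: "((\<lambda>t. G (u t)) \<longlongrightarrow> 0) at_top"
  using tendsto_diff[OF F_u_tendsto psi_u_tendsto] unfolding G_def by simp

theorem derivatives_tendsto_zero:
  fixes S E I R :: "real \<Rightarrow> real"
  assumes S_eq: "\<And>t. S t = K * u t"
    and E_eq: "\<And>t. E t = E0 * exp (- \<delta> * t)
      + K * exp (- \<delta> * t) * integral {u t..u0} (\<lambda>v. exp (\<delta> * \<phi> v))"
    and I_eq: "\<And>t. I t = N - K * u t + (\<gamma> / \<beta>) * ln (u t) - E t"
    and R_eq: "\<And>t. R t = - (\<gamma> / \<beta>) * ln (u t)"
  shows "(\<forall>t>0. S differentiable (at t) \<and> E differentiable (at t)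
                \<and> I differentiable (at t) \<and> R differentiable (at t))
         \<and> (deriv S \<longlongrightarrow> 0) at_top \<and> (deriv E \<longlongrightarrow> 0) at_top
         \<and> (deriv I \<longlongrightarrow> 0) at_top \<and> (deriv R \<longlongrightarrow> 0) at_top"
proof -
  have E_G: "E t = G (u t) / \<beta>" if "0 < t" for t
    using E_formula_eq_G[OF that] E_eq by simp
  have I_psi: "I t = \<psi> (u t) / \<beta>" if "0 < t" for t
    using E_G[OF that] rates_pos unfolding I_eq G_def F_def by (simp add: field_simps)
  have "(S has_real_derivative - K * (u t * \<psi> (u t))) (at t)" if "0 < t" for t
    unfolding S_eq[abs_def] using DERIV_cmult[OF u_has_real_derivative[OF that], of K] by simp
  then have S: "(\<forall>t>0. S differentiable (at t)) \<and> (deriv S \<longlongrightarrow> 0) at_top"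
    by (rule differentiable_and_deriv_tendsto_at_top)
      (auto intro!: tendsto_eq_intros u_tendsto psi_u_tendsto)
  have "(E has_real_derivative K * u t * \<psi> (u t) - \<delta> * G (u t) / \<beta>) (at t)" if "0 < t" for t
    using G_u_has_real_derivative[OF that]
    by (rule has_field_derivative_transform_within_open[where S = "{0<..}"]) (use that E_G in auto)
  then have E: "(\<forall>t>0. E differentiable (at t)) \<and> (deriv E \<longlongrightarrow> 0) at_top"
    by (rule differentiable_and_deriv_tendsto_at_top)
      (use rates_pos in \<open>auto intro!: tendsto_eq_intros u_tendsto psi_u_tendsto G_u_tendsto\<close>)
  have "(I has_real_derivative (\<delta> * F (u t) - (\<gamma> + \<delta>) * \<psi> (u t)) / \<beta>) (at t)"
    if "0 < t" for t
    using psi_u_has_real_derivative[OF that]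
    by (rule has_field_derivative_transform_within_open[where S = "{0<..}"]) (use that I_psi in auto)
  then have I: "(\<forall>t>0. I differentiable (at t)) \<and> (deriv I \<longlongrightarrow> 0) at_top"
    by (rule differentiable_and_deriv_tendsto_at_top)
      (use rates_pos in \<open>auto intro!: tendsto_eq_intros psi_u_tendsto F_u_tendsto\<close>)
  have "(R has_real_derivative \<gamma> / \<beta> * \<psi> (u t)) (at t)" if "0 < t" for t
    unfolding R_eq[abs_def] by (rule ln_u_has_real_derivative[OF that])
  then have R: "(\<forall>t>0. R differentiable (at t)) \<and> (deriv R \<longlongrightarrow> 0) at_top"
    by (rule differentiable_and_deriv_tendsto_at_top)
      (use rates_pos in \<open>auto intro!: tendsto_eq_intros psi_u_tendsto\<close>)
  from S E I R show ?thesis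
    by blast
qed

end

theorem theorem13:
  fixes \<beta> \<gamma> \<delta> St Et It Rt \<alpha> :: real and \<psi> :: "real \<Rightarrow> real"
    and S E I R :: "real \<Rightarrow> real"
  assumes "\<beta> > 0" and "\<gamma> > 0" and "\<delta> > 0" and "St + Et + It + Rt > 0"
    and A1: "It > 0"
    and A2: "Et > (\<gamma> / \<delta>) * It"
    and A3: "St > \<delta> * Et / (\<beta> * It)"
    and A4: "Rt \<ge> 0" "St + Et + It + Rt > St * exp ((\<beta> / \<gamma>) * Rt) + Rt"
    and alpha: "Rt < \<alpha>" "\<alpha> < St + Et + It + Rt"
      "\<alpha> = (St + Et + It + Rt) - St * exp ((\<beta> / \<gamma>) * Rt) * exp (- (\<beta> / \<gamma>) * \<alpha>)"
    and A5: "St < (\<gamma> / \<beta>) * exp ((\<beta> / \<gamma>) * (\<alpha> - Rt))"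
    and psi_cont: "continuous_on {exp (- (\<beta> / \<gamma>) * \<alpha>)<..exp (- (\<beta> / \<gamma>) * Rt)} \<psi>"
    and psi_pos: "\<forall>u\<in>{exp (- (\<beta> / \<gamma>) * \<alpha>)<..exp (- (\<beta> / \<gamma>) * Rt)}. \<psi> u > 0"
    and psi_diff: "\<psi> differentiable_on {exp (- (\<beta> / \<gamma>) * \<alpha>)<..<exp (- (\<beta> / \<gamma>) * Rt)}"
    and psi_C1: "continuous_on {exp (- (\<beta> / \<gamma>) * \<alpha>)<..<exp (- (\<beta> / \<gamma>) * Rt)} (deriv \<psi>)"
    and psi_ode: "\<forall>u\<in>{exp (- (\<beta> / \<gamma>) * \<alpha>)<..<exp (- (\<beta> / \<gamma>) * Rt)}.
                   deriv \<psi> u * \<psi> u - (\<gamma> + \<delta>) / u * \<psi> u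
                   = - \<delta> * (\<beta> * (St + Et + It + Rt) - \<beta> * St * exp ((\<beta> / \<gamma>) * Rt) * u
                            + \<gamma> * ln u) / u"
    and psi_init: "\<psi> (exp (- (\<beta> / \<gamma>) * Rt)) = \<beta> * It"
    and S_def: "\<And>t. S t = St * exp ((\<beta> / \<gamma>) * Rt)
                  * seir_phiinv \<psi> (exp (- (\<beta> / \<gamma>) * \<alpha>)) (exp (- (\<beta> / \<gamma>) * Rt)) t"
    and E_def: "\<And>t. E t = Et * exp (- \<delta> * t)
                 + St * exp ((\<beta> / \<gamma>) * Rt) * exp (- \<delta> * t)
                   * integral {seir_phiinv \<psi> (exp (- (\<beta> / \<gamma>) * \<alpha>)) (exp (- (\<beta> / \<gamma>) * Rt)) t
                               ..exp (- (\<beta> / \<gamma>) * Rt)}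
                       (\<lambda>v. exp (\<delta> * seir_phi \<psi> (exp (- (\<beta> / \<gamma>) * Rt)) v))"
    and I_def: "\<And>t. I t = (St + Et + It + Rt)
                 - St * exp ((\<beta> / \<gamma>) * Rt)
                   * seir_phiinv \<psi> (exp (- (\<beta> / \<gamma>) * \<alpha>)) (exp (- (\<beta> / \<gamma>) * Rt)) t
                 + (\<gamma> / \<beta>) * ln (seir_phiinv \<psi> (exp (- (\<beta> / \<gamma>) * \<alpha>)) (exp (- (\<beta> / \<gamma>) * Rt)) t)
                 - E t"
    and R_def: "\<And>t. R t = - (\<gamma> / \<beta>)
                 * ln (seir_phiinv \<psi> (exp (- (\<beta> / \<gamma>) * \<alpha>)) (exp (- (\<beta> / \<gamma>) * Rt)) t)"
  shows "(\<forall>t>0. S differentiable (at t) \<and> E differentiable (at t)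
                \<and> I differentiable (at t) \<and> R differentiable (at t))
         \<and> (deriv S \<longlongrightarrow> 0) at_top \<and> (deriv E \<longlongrightarrow> 0) at_top
         \<and> (deriv I \<longlongrightarrow> 0) at_top \<and> (deriv R \<longlongrightarrow> 0) at_top"
proof -
  define N K ui u0 where "N = St + Et + It + Rt" and "K = St * exp ((\<beta> / \<gamma>) * Rt)"
    and "ui = exp (- (\<beta> / \<gamma>) * \<alpha>)" and "u0 = exp (- (\<beta> / \<gamma>) * Rt)"
  have Et_pos: "0 < Et"
    using A1 A2 assms(2,3) by (smt (verit) divide_pos_pos mult_pos_pos)
  have St_pos: "0 < St"
    using A1 A3 Et_pos assms(1,3) by (smt (verit) divide_pos_pos mult_pos_pos)
  have K_u0: "K * u0 = St" and ln_u0: "\<gamma> * ln u0 = - \<beta> * Rt" and ln_ui: "\<gamma> * ln ui = - \<beta> * \<alpha>"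
    unfolding K_def u0_def ui_def using assms(2) by (simp_all add: mult.assoc flip: exp_add)
  interpret seir_trajectory \<beta> \<gamma> \<delta> N K ui u0 Et \<psi>
  proof
    show "0 < K" "0 < ui"
      unfolding K_def ui_def using St_pos by simp_all
    show "ui < u0"
      unfolding ui_def u0_def using alpha(1) assms(1,2) by (simp add: divide_strict_right_mono)
    have "\<alpha> = N - K * ui"
      using alpha(3) unfolding N_def K_def ui_def by simp
    moreover have "\<beta> * N - \<beta> * K * ui + \<gamma> * ln ui = \<beta> * (N - K * ui - \<alpha>)"
      unfolding ln_ui by (simp add: algebra_simps)
    ultimately show "\<beta> * N - \<beta> * K * ui + \<gamma> * ln ui = 0"
      by simp
    have "\<beta> * K * u0 = \<beta> * St"
      using K_u0 by (simp add: mult.assoc)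
    with psi_init show "\<psi> u0 = \<beta> * N - \<beta> * K * u0 + \<gamma> * ln u0 - \<beta> * Et"
      unfolding ln_u0 N_def u0_def[symmetric] by (simp add: algebra_simps)
    show "\<And>v. v \<in> {ui<..<u0} \<Longrightarrow> deriv \<psi> v * \<psi> v - (\<gamma> + \<delta>) / v * \<psi> v
        = - \<delta> * (\<beta> * N - \<beta> * K * v + \<gamma> * ln v) / v"
      using psi_ode unfolding N_def K_def ui_def u0_def by (simp add: mult.assoc)
  qed (use assms(1-3) Et_pos psi_cont psi_pos psi_diff in \<open>simp_all add: ui_def u0_def\<close>)
  show ?thesis
    by (rule derivatives_tendsto_zero)
      (simp_all only: S_def E_def I_def R_def N_def K_def ui_def u0_def)
qed

end
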